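(* Let $X$ be a systolic complex and let $D\geq 0$ be a constant such that for all good geodesics $(v_0,\dots,v_n)$ and $(w_0,\dots,w_m)$ in $X$ with $v_0=w_0$ and all $0\le c\le 1$ one has $d(v_{\lfloor cn\rfloor},w_{\lfloor cm\rfloor})\le c\cdot d(v_n,w_m)+D$ (such a universal constant exists by a result of Osajda–Przytycki). Let $\eta=(v_0,v_1,\dots)$ and $\xi=(w_0,w_1,\dots)$ be good geodesic rays in $X$ which are equivalent, i.e. there is $K\ge 0$ with $d(v_i,w_i)\le K$ for all $i\ge 0$. Then for every $i\ge 0$, $$d(v_i,w_i)\le d(v_0,w_0)+2D+1.$$
   Context: A simplicial complex is flag if every set of pairwise adjacent vertices spans a simplex; it is $6$-large if every embedded cycle of length $4$ or $5$ has a diagonal. A simplicial complex $X$ is systolic if it is simply connected and all vertex links are flag and $6$-large. $d$ denotes the combinatorial (edge-path) metric on the vertex set; a geodesic is a sequence of vertices $(v_i)$ with $d(v_i,v_j)=|i-j|$. Good geodesics are the subclass of geodesics in a systolic complex defined by Osajda and Przytycki ("Boundaries of systolic groups", Geom. Topol. 2009): any two vertices are joined by a good geodesic, subgeodesics of good geodesics are good, and simplicial automorphisms preserve good geodesics. A good geodesic ray is a geodesic ray all of whose finite subgeodesics are good geodesics. *)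

theory Defs
  imports Complex_Main
begin

definition simplicial_complex :: "'v set set \<Rightarrow> bool" where
  "simplicial_complex X \<longleftrightarrow>
     (\<forall>s\<in>X. finite s \<and> s \<noteq> {}) \<and>
     (\<forall>s\<in>X. \<forall>t. t \<subseteq> s \<and> t \<noteq> {} \<longrightarrow> t \<in> X)"

definition verts :: "'v set set \<Rightarrow> 'v set" where
  "verts X = \<Union>X"

definition adj :: "'v set set \<Rightarrow> 'v \<Rightarrow> 'v \<Rightarrow> bool" where
  "adj X u v \<longleftrightarrow> u \<noteq> v \<and> {u, v} \<in> X"

definition flag :: "'v set set \<Rightarrow> bool" where
  "flag X \<longleftrightarrow> (\<forall>S. finite S \<and> S \<noteq> {} \<and> S \<subseteq> verts X \<and>
      (\<forall>u\<in>S. \<forall>v\<in>S. u \<noteq> v \<longrightarrow> adj X u v) \<longrightarrow> S \<in> X)"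

definition embedded_cycle :: "'v set set \<Rightarrow> 'v list \<Rightarrow> bool" where
  "embedded_cycle X cs \<longleftrightarrow> length cs \<ge> 3 \<and> distinct cs \<and>
     (\<forall>i<length cs. adj X (cs ! i) (cs ! ((i + 1) mod length cs)))"

definition has_diagonal :: "'v set set \<Rightarrow> 'v list \<Rightarrow> bool" where
  "has_diagonal X cs \<longleftrightarrow> (\<exists>i<length cs. \<exists>j<length cs.
      j \<noteq> (i + 1) mod length cs \<and> i \<noteq> (j + 1) mod length cs \<and> i \<noteq> j \<and>
      adj X (cs ! i) (cs ! j))"

definition six_large :: "'v set set \<Rightarrow> bool" where
  "six_large X \<longleftrightarrow> flag X \<and>
     (\<forall>cs. embedded_cycle X cs \<and> length cs \<in> {4, 5} \<longrightarrow> has_diagonal X cs)"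

definition link :: "'v set set \<Rightarrow> 'v \<Rightarrow> 'v set set" where
  "link X v = {s \<in> X. v \<notin> s \<and> insert v s \<in> X}"

text \<open>Edge paths (consecutive vertices equal or adjacent), and the combinatorial
edge-path homotopy relation (Spanier).\<close>
definition edge_path :: "'v set set \<Rightarrow> 'v list \<Rightarrow> bool" where
  "edge_path X p \<longleftrightarrow> p \<noteq> [] \<and> set p \<subseteq> verts X \<and>
     (\<forall>i. i + 1 < length p \<longrightarrow> {p ! i, p ! (i + 1)} \<in> X)"

definition elem_move :: "'v set set \<Rightarrow> 'v list \<Rightarrow> 'v list \<Rightarrow> bool" where
  "elem_move X p q \<longleftrightarrow>
     (\<exists>xs ys a b c. p = xs @ [a, b, c] @ ys \<and> q = xs @ [a, c] @ ys \<and> {a, b, c} \<in> X) \<or>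
     (\<exists>xs ys a. p = xs @ [a, a] @ ys \<and> q = xs @ [a] @ ys)"

definition simply_connected :: "'v set set \<Rightarrow> bool" where
  "simply_connected X \<longleftrightarrow> verts X \<noteq> {} \<and>
     (\<forall>u\<in>verts X. \<forall>v\<in>verts X. \<exists>p. edge_path X p \<and> hd p = u \<and> last p = v) \<and>
     (\<forall>p. edge_path X p \<and> hd p = last p \<longrightarrow>
        (p, [hd p]) \<in> {(a, b). elem_move X a b \<or> elem_move X b a}\<^sup>*)"

definition systolic :: "'v set set \<Rightarrow> bool" where
  "systolic X \<longleftrightarrow> simplicial_complex X \<and> simply_connected X \<and>
     (\<forall>v\<in>verts X. flag (link X v) \<and> six_large (link X v))"

definition cdist :: "'v set set \<Rightarrow> 'v \<Rightarrow> 'v \<Rightarrow> nat" where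
  "cdist X u v = (LEAST n. \<exists>p. length p = n + 1 \<and> p \<noteq> [] \<and> hd p = u \<and> last p = v \<and>
       set p \<subseteq> verts X \<and> (\<forall>i. i + 1 < length p \<longrightarrow> adj X (p ! i) (p ! (i + 1))))"

definition geodesic :: "'v set set \<Rightarrow> 'v list \<Rightarrow> bool" where
  "geodesic X p \<longleftrightarrow> p \<noteq> [] \<and> set p \<subseteq> verts X \<and>
     (\<forall>i<length p. \<forall>j<length p. cdist X (p ! i) (p ! j) = (if i \<le> j then j - i else i - j))"

definition simplicial_automorphism :: "'v set set \<Rightarrow> ('v \<Rightarrow> 'v) \<Rightarrow> bool" where
  "simplicial_automorphism X f \<longleftrightarrow> bij_betw f (verts X) (verts X) \<and>
     (\<forall>s. s \<subseteq> verts X \<longrightarrow> (f ` s \<in> X \<longleftrightarrow> s \<in> X))"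

definition subpath :: "'v list \<Rightarrow> nat \<Rightarrow> nat \<Rightarrow> 'v list" where
  "subpath p i j = take (j + 1 - i) (drop i p)"

text \<open>The structural properties of the Osajda--Przytycki good geodesics that are
used: good geodesics are geodesics; any two vertices are joined by one; they are
closed under subgeodesics, reversal and simplicial automorphisms.\<close>
definition good_geodesic_system :: "'v set set \<Rightarrow> ('v list \<Rightarrow> bool) \<Rightarrow> bool" where
  "good_geodesic_system X G \<longleftrightarrow>
     (\<forall>p. G p \<longrightarrow> geodesic X p) \<and>
     (\<forall>u\<in>verts X. \<forall>v\<in>verts X. \<exists>p. G p \<and> hd p = u \<and> last p = v) \<and>
     (\<forall>p i j. G p \<and> i \<le> j \<and> j < length p \<longrightarrow> G (subpath p i j)) \<and>
     (\<forall>p. G p \<longrightarrow> G (rev p)) \<and>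
     (\<forall>p f. G p \<and> simplicial_automorphism X f \<longrightarrow> G (map f p))"

definition good_ray :: "'v set set \<Rightarrow> ('v list \<Rightarrow> bool) \<Rightarrow> (nat \<Rightarrow> 'v) \<Rightarrow> bool" where
  "good_ray X G v \<longleftrightarrow>
     (\<forall>i j. cdist X (v i) (v j) = (if i \<le> j then j - i else i - j)) \<and>
     (\<forall>i j. i \<le> j \<longrightarrow> G (map v [i..<Suc j]))"

end

theory Submission imports Defs begin

text \<open>Fix n \<ge> i and a good geodesic \<gamma> from v 0 to w n.  The fellow-traveller
property applied to (v 0, ..., v n) and \<gamma> at ratio i/n, and to the reversals of
(w 0, ..., w n) and \<gamma> at ratio 1 - i/n, brings v i and w i within distance
(i/n) d(v n, w n) + D and d(v 0, w 0) + D of two vertices of \<gamma> which are at most one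
apart.  Hence d(v i, w i) \<le> (i/n) K + d(v 0, w 0) + 2D + 1, and n \<rightarrow> \<infinity> removes
the first term.\<close>

definition walk :: "'v set set \<Rightarrow> 'v \<Rightarrow> 'v \<Rightarrow> 'v list \<Rightarrow> bool" where
  "walk X u v p \<longleftrightarrow> p \<noteq> [] \<and> hd p = u \<and> last p = v \<and> set p \<subseteq> verts X \<and> successively (adj X) p"

lemma cdist_eq_Least_walk: "cdist X u v = (LEAST n. \<exists>p. length p = n + 1 \<and> walk X u v p)"
  unfolding cdist_def walk_def successively_conv_nth by (simp add: conj_ac)

lemma adj_commute: "adj X u v \<longleftrightarrow> adj X v u"
  unfolding adj_def by (auto simp: insert_commute)

lemma walk_rev: "walk X u v p \<Longrightarrow> walk X v u (rev p)"
  unfolding walk_def by (auto simp: hd_rev last_rev adj_commute)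

lemma cdist_commute: "cdist X u v = cdist X v u"
proof -
  have "(\<exists>p. length p = n + 1 \<and> walk X u v p) \<longleftrightarrow> (\<exists>p. length p = n + 1 \<and> walk X v u p)"
    for n by (metis length_rev rev_rev_ident walk_rev)
  then show ?thesis unfolding cdist_eq_Least_walk by simp
qed

lemma cdist_le_walk: "walk X u v p \<Longrightarrow> cdist X u v \<le> length p - 1"
  unfolding cdist_eq_Least_walk by (rule Least_le) (auto simp: walk_def)

lemma walk_of_length_cdist:
  assumes "walk X u v p"
  shows "\<exists>q. length q = cdist X u v + 1 \<and> walk X u v q"
proof -
  have "\<exists>n q. length q = n + 1 \<and> walk X u v q"
    using assms by (intro exI[of _ "length p - 1"] exI[of _ p]) (auto simp: walk_def)
  from LeastI_ex[OF this] show ?thesis unfolding cdist_eq_Least_walk .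
qed

lemma walk_append:
  assumes "walk X u v p" "walk X v w q"
  shows "walk X u w (p @ tl q)"
proof (cases q)
  case (Cons a r)
  with assms show ?thesis
    by (cases r) (auto simp: walk_def successively_append_iff successively_Cons)
qed (use assms in \<open>simp add: walk_def\<close>)

lemma simply_connected_walk:
  assumes "simply_connected X" "u \<in> verts X" "v \<in> verts X"
  shows "\<exists>p. walk X u v p"
proof -
  from assms obtain p where p: "edge_path X p" "hd p = u" "last p = v"
    unfolding simply_connected_def by blast
  have "successively (\<lambda>a b. {a, b} \<in> X) p"
    using p(1) unfolding edge_path_def successively_conv_nth by simp
  then have "successively (\<lambda>a b. {a, b} \<in> X) (remdups_adj p)"
    by (rule successively_remdups_adjI)
  then have "successively (adj X) (remdups_adj p)"
    using distinct_adj_remdups_adj[of p]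
    unfolding distinct_adj_def successively_conv_nth adj_def by blast
  with p have "walk X u v (remdups_adj p)"
    unfolding walk_def edge_path_def by auto
  then show ?thesis ..
qed

lemma cdist_triangle:
  assumes "simply_connected X" "u \<in> verts X" "v \<in> verts X" "w \<in> verts X"
  shows "cdist X u w \<le> cdist X u v + cdist X v w"
proof -
  obtain p where p: "length p = cdist X u v + 1" "walk X u v p"
    using simply_connected_walk[OF assms(1-3)] by (metis walk_of_length_cdist)
  obtain q where q: "length q = cdist X v w + 1" "walk X v w q"
    using simply_connected_walk[OF assms(1,3,4)] by (metis walk_of_length_cdist)
  show ?thesis using cdist_le_walk[OF walk_append[OF p(2) q(2)]] p(1) q(1) by simp
qed

definition good_geodesics_fellow_travel :: "'v set set \<Rightarrow> ('v list \<Rightarrow> bool) \<Rightarrow> real \<Rightarrow> bool" where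
  "good_geodesics_fellow_travel X G D \<longleftrightarrow>
     (\<forall>p q (c::real). G p \<and> G q \<and> hd p = hd q \<and> 0 \<le> c \<and> c \<le> 1 \<longrightarrow>
        real (cdist X (p ! nat \<lfloor>c * real (length p - 1)\<rfloor>) (q ! nat \<lfloor>c * real (length q - 1)\<rfloor>))
          \<le> c * real (cdist X (last p) (last q)) + D)"

lemma good_geodesics_fellow_travelD:
  assumes "good_geodesics_fellow_travel X G D" "G p" "G q" "hd p = hd q" "0 \<le> c" "c \<le> 1"
  shows "real (cdist X (p ! nat \<lfloor>c * real (length p - 1)\<rfloor>) (q ! nat \<lfloor>c * real (length q - 1)\<rfloor>))
    \<le> c * real (cdist X (last p) (last q)) + D"
  using assms unfolding good_geodesics_fellow_travel_def by blast

lemma good_geodesic_system_verts: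
  assumes "good_geodesic_system X G" "G p"
  shows "set p \<subseteq> verts X"
  using assms unfolding good_geodesic_system_def geodesic_def by blast

lemma nat_floor_add_complement:
  fixes c :: real
  assumes "0 \<le> c" "c \<le> 1"
  shows "nat \<lfloor>c * real m\<rfloor> + nat \<lfloor>(1 - c) * real m\<rfloor> \<le> m"
    and "m \<le> nat \<lfloor>c * real m\<rfloor> + nat \<lfloor>(1 - c) * real m\<rfloor> + 1"
proof -
  have "c * real m \<ge> 0" "(1 - c) * real m \<ge> 0" using assms by simp_all
  moreover have "c * real m + (1 - c) * real m = real m" by (simp add: algebra_simps)
  ultimately show "nat \<lfloor>c * real m\<rfloor> + nat \<lfloor>(1 - c) * real m\<rfloor> \<le> m"
    and "m \<le> nat \<lfloor>c * real m\<rfloor> + nat \<lfloor>(1 - c) * real m\<rfloor> + 1"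
    by linarith+
qed

lemma good_geodesics_cdist_le_ratio:
  assumes "simply_connected X" "good_geodesic_system X G" "good_geodesics_fellow_travel X G D"
    and "G (map v [0..<Suc n])" "G (map w [0..<Suc n])" "i \<le> n" "0 < n"
  shows "real (cdist X (v i) (w i))
    \<le> real i / real n * real (cdist X (v n) (w n)) + real (cdist X (v 0) (w 0)) + 2 * D + 1"
proof -
  define c where "c = real i / real n"
  have c: "0 \<le> c" "c \<le> 1" using assms(6,7) by (simp_all add: c_def)
  have vi: "v k \<in> verts X" and wi: "w k \<in> verts X" if "k \<le> n" for k
    using that good_geodesic_system_verts[OF assms(2,4)] good_geodesic_system_verts[OF assms(2,5)]
    by (auto simp del: upt_Suc)
  obtain \<gamma> where \<gamma>: "G \<gamma>" "hd \<gamma> = v 0" "last \<gamma> = w n"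
    using assms(2) vi wi unfolding good_geodesic_system_def by blast
  have geo: "geodesic X \<gamma>" and Grev: "G (rev \<gamma>)" "G (rev (map w [0..<Suc n]))"
    using assms(2,5) \<gamma>(1) unfolding good_geodesic_system_def by blast+
  define m where "m = length \<gamma> - 1"
  have len: "length \<gamma> = m + 1" using geo unfolding m_def geodesic_def by simp
  define j j' where "j = nat \<lfloor>c * real m\<rfloor>" and "j' = nat \<lfloor>(1 - c) * real m\<rfloor>"
  have jj': "j + j' \<le> m" "m \<le> j + j' + 1"
    unfolding j_def j'_def using nat_floor_add_complement[OF c] by blast+
  have near_v: "real (cdist X (v i) (\<gamma> ! j)) \<le> c * real (cdist X (v n) (w n)) + D"
    using good_geodesics_fellow_travelD[OF assms(3,4) \<gamma>(1) _ c]
      \<gamma> len assms(6,7)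
    by (simp add: c_def j_def hd_map last_map del: upt_Suc)
  define W where "W = rev (map w [0..<Suc n])"
  have "real (cdist X (W ! nat \<lfloor>(1 - c) * real (length W - 1)\<rfloor>)
      (rev \<gamma> ! nat \<lfloor>(1 - c) * real (length (rev \<gamma>) - 1)\<rfloor>))
    \<le> (1 - c) * real (cdist X (last W) (last (rev \<gamma>))) + D"
    using c \<gamma>(3) by (intro good_geodesics_fellow_travelD[OF assms(3) Grev(2,1)[folded W_def]])
      (auto simp: W_def hd_rev)
  moreover have "(1 - c) * real n = real (n - i)"
    using assms(6,7) by (simp add: c_def field_simps of_nat_diff)
  then have "nat \<lfloor>(1 - c) * real n\<rfloor> = n - i"
    by simp
  then have "W ! nat \<lfloor>(1 - c) * real (length W - 1)\<rfloor> = w i"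
    using assms(6) by (simp add: W_def rev_nth del: upt_Suc)
  moreover have "rev \<gamma> ! nat \<lfloor>(1 - c) * real (length (rev \<gamma>) - 1)\<rfloor> = \<gamma> ! (m - j')"
    using jj' len by (simp add: j'_def rev_nth)
  moreover have "last W = w 0" "last (rev \<gamma>) = v 0"
    using \<gamma>(2) by (simp_all add: W_def last_rev hd_map del: upt_Suc)
  ultimately have near_w: "real (cdist X (w i) (\<gamma> ! (m - j'))) \<le> (1 - c) * real (cdist X (w 0) (v 0)) + D"
    by simp
  have short: "cdist X (\<gamma> ! j) (\<gamma> ! (m - j')) \<le> 1"
    using geo jj' len unfolding geodesic_def by auto
  have "\<gamma> ! j \<in> verts X" "\<gamma> ! (m - j') \<in> verts X"
    using geo jj' len unfolding geodesic_def by auto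
  then have "cdist X (v i) (w i) \<le> cdist X (v i) (\<gamma> ! j) + cdist X (\<gamma> ! j) (w i)"
    and "cdist X (\<gamma> ! j) (w i) \<le> cdist X (\<gamma> ! j) (\<gamma> ! (m - j')) + cdist X (\<gamma> ! (m - j')) (w i)"
    using cdist_triangle[OF assms(1)] vi wi assms(6) by blast+
  with short have "cdist X (v i) (w i) \<le> cdist X (v i) (\<gamma> ! j) + 1 + cdist X (w i) (\<gamma> ! (m - j'))"
    by (simp add: cdist_commute[of X "w i"])
  moreover have "(1 - c) * real (cdist X (w 0) (v 0)) \<le> real (cdist X (v 0) (w 0))"
    using c by (simp add: cdist_commute[of X "w 0"] mult_left_le_one_le)
  ultimately show ?thesis using near_v near_w by (simp add: c_def)
qed

lemma le_of_eventually_le_div_plus: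
  fixes x a b :: real
  assumes "\<forall>n\<ge>N. x \<le> a / real n + b"
  shows "x \<le> b"
proof -
  have "(\<lambda>n. a / real n + b) \<longlonglongrightarrow> 0 + b"
    by (intro tendsto_add lim_const_over_n tendsto_const)
  with assms show ?thesis by (intro LIMSEQ_le_const) auto
qed

theorem corollary2p9:
  fixes X :: "'v set set" and G :: "'v list \<Rightarrow> bool" and D :: real
    and v w :: "nat \<Rightarrow> 'v"
  assumes "systolic X"
    and "good_geodesic_system X G"
    and "D \<ge> 0"
    and "\<forall>p q (c::real). G p \<and> G q \<and> hd p = hd q \<and> 0 \<le> c \<and> c \<le> 1 \<longrightarrow>
           real (cdist X (p ! nat \<lfloor>c * real (length p - 1)\<rfloor>) (q ! nat \<lfloor>c * real (length q - 1)\<rfloor>))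
             \<le> c * real (cdist X (last p) (last q)) + D"
    and "good_ray X G v" and "good_ray X G w"
    and "\<exists>K::real. K \<ge> 0 \<and> (\<forall>i. real (cdist X (v i) (w i)) \<le> K)"
  shows "\<forall>i. real (cdist X (v i) (w i)) \<le> real (cdist X (v 0) (w 0)) + 2 * D + 1"
proof
  fix i
  obtain K where K: "\<And>k. real (cdist X (v k) (w k)) \<le> K" using assms(7) by blast
  have "simply_connected X" using assms(1) unfolding systolic_def by blast
  moreover have "good_geodesics_fellow_travel X G D"
    using assms(4) unfolding good_geodesics_fellow_travel_def .
  moreover have "G (map v [0..<Suc n])" "G (map w [0..<Suc n])" for n
    using assms(5,6) unfolding good_ray_def by blast+
  ultimately have bound: "real (cdist X (v i) (w i))
      \<le> real i / real n * real (cdist X (v n) (w n)) + real (cdist X (v 0) (w 0)) + 2 * D + 1"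
    if "n \<ge> Suc i" for n
    using good_geodesics_cdist_le_ratio[OF _ assms(2)] that by simp
  have K_ratio: "real i / real n * real (cdist X (v n) (w n)) \<le> real i * K / real n" for n
    using mult_left_mono[OF K] by (simp add: divide_le_cancel)
  have "\<forall>n\<ge>Suc i. real (cdist X (v i) (w i))
      \<le> real i * K / real n + (real (cdist X (v 0) (w 0)) + 2 * D + 1)"
  proof (intro allI impI)
    fix n assume "n \<ge> Suc i"
    from bound[OF this] K_ratio[of n]
    show "real (cdist X (v i) (w i))
        \<le> real i * K / real n + (real (cdist X (v 0) (w 0)) + 2 * D + 1)"
      by linarith
  qed
  then show "real (cdist X (v i) (w i)) \<le> real (cdist X (v 0) (w 0)) + 2 * D + 1"
    by (rule le_of_eventually_le_div_plus)
qed

end
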